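(* Let $E$ be an equivalence relation on $2^\mathbb{N}$. Then $E$ is $\Sigma^0_2$-graphable if and only if $E$ is $\Sigma^0_2$. Moreover, this relativizes: for any real parameter $a$, $E$ is $\Sigma^0_2(a)$-graphable if and only if $E$ is $\Sigma^0_2(a)$.
   Context: For a pointclass $\Gamma$, $E$ is $\Gamma$-graphable if there is a simple undirected graph $G\subseteq 2^\mathbb{N}\times2^\mathbb{N}$ in $\Gamma$ whose connectedness relation (connected by a finite path) equals $E$. $\Sigma^0_2$ is the lightface class. *)

theory Defs
  imports Main
begin

type_synonym cantor = "nat \<Rightarrow> bool"

datatype recf =
    Z
  | S
  | Proj nat
  | Orc nat
  | Cn recf "recf list"
  | Pr recf recf
  | Mn recf

inductive reval :: "cantor list \<Rightarrow> recf \<Rightarrow> nat list \<Rightarrow> nat \<Rightarrow> bool" for os where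
  zero: "reval os Z xs 0"
| succ: "reval os S (x # xs) (Suc x)"
| proj: "i < length xs \<Longrightarrow> reval os (Proj i) xs (xs ! i)"
| orc:  "i < length os \<Longrightarrow> reval os (Orc i) (x # xs) (if (os ! i) x then 1 else 0)"
| cn:   "list_all2 (\<lambda>g y. reval os g xs y) gs ys \<Longrightarrow> reval os f ys z \<Longrightarrow> reval os (Cn f gs) xs z"
| pr0:  "reval os f xs y \<Longrightarrow> reval os (Pr f g) (0 # xs) y"
| prS:  "reval os (Pr f g) (n # xs) y \<Longrightarrow> reval os g (n # y # xs) z
          \<Longrightarrow> reval os (Pr f g) (Suc n # xs) z"
| mn:   "reval os f (n # xs) 0 \<Longrightarrow> (\<forall>m<n. \<exists>k. reval os f (m # xs) (Suc k))
          \<Longrightarrow> reval os (Mn f) xs n"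
monos list_all2_mono

definition halts :: "cantor list \<Rightarrow> recf \<Rightarrow> nat list \<Rightarrow> bool" where
  "halts os f xs \<longleftrightarrow> (\<exists>y. reval os f xs y)"

text \<open>A set P of pairs of reals is Sigma^0_2 relative to the parameter list ps
  (lightface Sigma^0_2 for ps = [], Sigma^0_2(a) for ps = [a]) iff there is an
  oracle machine f such that (x,y) \<in> P iff there exists n such that f with oracles
  ps @ [x, y] does not halt on input n  (i.e. P = exists n. Pi^0_1(ps)).\<close>

definition sigma02 :: "cantor list \<Rightarrow> (cantor \<times> cantor) set \<Rightarrow> bool" where
  "sigma02 ps P \<longleftrightarrow>
     (\<exists>f. \<forall>x y. (x, y) \<in> P \<longleftrightarrow> (\<exists>n. \<not> halts (ps @ [x, y]) f [n]))"

definition graphable :: "((cantor \<times> cantor) set \<Rightarrow> bool) \<Rightarrow> (cantor \<times> cantor) set \<Rightarrow> bool" where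
  "graphable \<Gamma> E \<longleftrightarrow> (\<exists>G. sym G \<and> irrefl G \<and> \<Gamma> G \<and> G\<^sup>* = E)"

end

theory Submission
  imports Defs
begin

text \<open>A \<Sigma>^0_2 equivalence relation \<open>E\<close> is the connectedness relation of the
  \<Sigma>^0_2 graph \<open>E - Id\<close>. Conversely, let \<open>G\<close> be a \<Sigma>^0_2 graph:
  \<open>(u, v) \<in> G\<close> iff a fixed oracle machine diverges on some input \<open>j\<close>. Allowing repeated
  vertices, \<open>(x, y) \<in> G^*\<close> iff for some \<open>N\<close> there are reals
  \<open>z_0 = x, \<dots>, z_N = y\<close> whose consecutive members are equal or joined by an edge
  with a witness \<open>j \<le> N\<close>. For fixed \<open>N\<close> this is a \<Pi>^0_1 property of
  \<open>x\<close>, \<open>y\<close> and the \<open>z_i\<close>, and by compactness of Cantor space (Koenig's lemma) the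
  existence of the \<open>z_i\<close> is again \<Pi>^0_1: for every depth \<open>d\<close> some
  assignment of the first \<open>d\<close> bits of \<open>z_0, \<dots>, z_N\<close> passes all tests that
  run the machine for \<open>d\<close> steps, which is a bounded search. Hence \<open>G^*\<close> is
  \<Sigma>^0_2. Everything is computed relative to oracles, so the argument relativises
  to a parameter.\<close>

section \<open>Computable functions relative to oracles\<close>

definition computable :: "nat \<Rightarrow> nat \<Rightarrow> (cantor list \<Rightarrow> nat list \<Rightarrow> nat) \<Rightarrow> bool" where
  "computable m k F \<longleftrightarrow>
     (\<exists>c. \<forall>os xs. length os = m \<longrightarrow> length xs = k \<longrightarrow> reval os c xs (F os xs))"

definition decidable :: "nat \<Rightarrow> nat \<Rightarrow> (cantor list \<Rightarrow> nat list \<Rightarrow> bool) \<Rightarrow> bool" where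
  "decidable m k P \<longleftrightarrow> computable m k (\<lambda>os xs. of_bool (P os xs))"

lemma computable_cong:
  assumes "computable m k F"
    and "\<And>os xs. length os = m \<Longrightarrow> length xs = k \<Longrightarrow> F os xs = G os xs"
  shows "computable m k G"
  using assms unfolding computable_def by metis

lemma decidable_cong:
  assumes "decidable m k P"
    and "\<And>os xs. length os = m \<Longrightarrow> length xs = k \<Longrightarrow> P os xs = Q os xs"
  shows "decidable m k Q"
  using assms unfolding decidable_def by (auto elim: computable_cong)

lemma computable_zero: "computable m k (\<lambda>os xs. 0)"
  unfolding computable_def by (auto intro: reval.zero)

lemma computable_proj: "i < k \<Longrightarrow> computable m k (\<lambda>os xs. xs ! i)"
  unfolding computable_def by (auto intro: reval.proj)

lemma computable_Suc_hd: "computable m 1 (\<lambda>os xs. Suc (xs ! 0))"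
  unfolding computable_def
  by (rule exI[of _ S]) (auto simp: length_Suc_conv intro: reval.succ)

lemma decidable_oracle_hd: "i < m \<Longrightarrow> decidable m 1 (\<lambda>os xs. (os ! i) (xs ! 0))"
  unfolding decidable_def computable_def
proof (intro exI[of _ "Orc i"] allI impI)
  fix os :: "cantor list" and xs :: "nat list"
  assume "i < m" "length os = m" "length xs = 1"
  then show "reval os (Orc i) xs (of_bool ((os ! i) (xs ! 0)))"
    using reval.orc[of i os "xs ! 0" "[]"] by (auto simp: length_Suc_conv)
qed

lemma computable_compose:
  assumes "computable m (length Fs) G" and "\<And>F. F \<in> set Fs \<Longrightarrow> computable m k F"
  shows "computable m k (\<lambda>os xs. G os (map (\<lambda>F. F os xs) Fs))"
proof -
  obtain c where c: "\<And>os xs. length os = m \<Longrightarrow> length xs = length Fs \<Longrightarrow> reval os c xs (G os xs)"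
    using assms(1) unfolding computable_def by blast
  have "\<forall>F\<in>set Fs. \<exists>c. \<forall>os xs. length os = m \<longrightarrow> length xs = k \<longrightarrow> reval os c xs (F os xs)"
    using assms(2) unfolding computable_def by blast
  from bchoice[OF this] obtain cF where
    cF: "\<forall>F\<in>set Fs. \<forall>os xs. length os = m \<longrightarrow> length xs = k \<longrightarrow> reval os (cF F) xs (F os xs)"
    by blast
  have "reval os (Cn c (map cF Fs)) xs (G os (map (\<lambda>F. F os xs) Fs))"
    if "length os = m" "length xs = k" for os xs
  proof (rule reval.cn)
    show "list_all2 (\<lambda>g y. reval os g xs y) (map cF Fs) (map (\<lambda>F. F os xs) Fs)"
      using cF that by (simp add: list_all2_map1 list_all2_map2 list_all2_same)
  qed (use c that in simp)
  then show ?thesis unfolding computable_def by blast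
qed

lemma computable_rec_nat:
  assumes F: "computable m k F" and H: "computable m (Suc (Suc k)) H"
  shows "computable m (Suc k)
    (\<lambda>os xs. rec_nat (F os (tl xs)) (\<lambda>n y. H os (n # y # tl xs)) (hd xs))"
proof -
  obtain cF where cF: "\<And>os xs. length os = m \<Longrightarrow> length xs = k \<Longrightarrow> reval os cF xs (F os xs)"
    using F unfolding computable_def by blast
  obtain cH where cH: "\<And>os xs. length os = m \<Longrightarrow> length xs = Suc (Suc k)
      \<Longrightarrow> reval os cH xs (H os xs)"
    using H unfolding computable_def by blast
  have "reval os (Pr cF cH) (n # ys) (rec_nat (F os ys) (\<lambda>n y. H os (n # y # ys)) n)"
    if "length os = m" "length ys = k" for os n ys
    by (induction n) (use cF cH that in \<open>auto intro: reval.pr0 reval.prS\<close>)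
  then show ?thesis
    unfolding computable_def
    by (intro exI[of _ "Pr cF cH"] allI impI) (auto simp: length_Suc_conv)
qed

lemma computable_compose1:
  "computable m 1 G \<Longrightarrow> computable m k F \<Longrightarrow> computable m k (\<lambda>os xs. G os [F os xs])"
  using computable_compose[of m "[F]" G k] by simp

lemma computable_compose2:
  assumes "computable m 2 G" "computable m k F1" "computable m k F2"
  shows "computable m k (\<lambda>os xs. G os [F1 os xs, F2 os xs])"
proof -
  have "computable m (length [F1, F2]) G"
    using assms(1) by (simp add: numeral_2_eq_2)
  from computable_compose[OF this] assms(2,3) show ?thesis
    by auto
qed

lemma computable_Suc: "computable m k F \<Longrightarrow> computable m k (\<lambda>os xs. Suc (F os xs))"
  using computable_compose1[OF computable_Suc_hd] by simp

lemma computable_const: "computable m k (\<lambda>os xs. c)"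
  by (induction c) (auto intro: computable_zero computable_Suc)

lemma computable_reindex:
  assumes "computable m (length is) F" and "\<forall>i\<in>set is. i < k"
  shows "computable m k (\<lambda>os xs. F os (map ((!) xs) is))"
  using computable_compose[of m "map (\<lambda>i os xs. xs ! i) is" F k] assms
  by (auto intro: computable_proj simp: comp_def)

lemma computable_subst_hd:
  assumes "computable m (Suc k) F" "computable m k B"
  shows "computable m k (\<lambda>os xs. F os (B os xs # xs))"
proof -
  have "computable m k (\<lambda>os xs. F os (map (\<lambda>F. F os xs) (B # map (\<lambda>i os xs. xs ! i) [0..<k])))"
    by (rule computable_compose) (use assms in \<open>auto intro: computable_proj\<close>)
  then show ?thesis
  proof (rule computable_cong)
    fix os :: "cantor list" and xs :: "nat list"
    assume "length xs = k"
    then show "F os (map (\<lambda>F. F os xs) (B # map (\<lambda>i os xs. xs ! i) [0..<k])) = F os (B os xs # xs)"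
      using map_nth[of xs] by (simp add: comp_def)
  qed
qed

lemma map_nth_upt_drop: "n \<le> length xs \<Longrightarrow> map ((!) xs) [n..<length xs] = drop n xs"
  by (rule nth_equalityI) auto

lemma computable_drop_snd:
  assumes "computable m (Suc k) F"
  shows "computable m (Suc (Suc k)) (\<lambda>os xs. F os (xs ! 0 # drop 2 xs))"
proof -
  have "computable m (Suc (Suc k)) (\<lambda>os xs. F os (map ((!) xs) (0 # [2..<Suc (Suc k)])))"
    by (rule computable_reindex) (use assms in \<open>auto simp del: upt_Suc\<close>)
  then show ?thesis
  proof (rule computable_cong)
    fix os :: "cantor list" and xs :: "nat list"
    assume "length xs = Suc (Suc k)"
    with map_nth_upt_drop[of 2 xs]
    show "F os (map ((!) xs) (0 # [2..<Suc (Suc k)])) = F os (xs ! 0 # drop 2 xs)"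
      by (simp del: upt_Suc)
  qed
qed

lemma computable_rec_nat1:
  assumes "computable m 2 (\<lambda>os xs. h (xs ! 0) (xs ! 1))"
  shows "computable m 1 (\<lambda>os xs. rec_nat a h (xs ! 0))"
proof -
  have "computable m (Suc 0)
      (\<lambda>os xs. rec_nat a (\<lambda>n y. h ((n # y # tl xs) ! 0) ((n # y # tl xs) ! 1)) (hd xs))"
    by (rule computable_rec_nat) (use assms in \<open>simp_all add: computable_const numeral_2_eq_2\<close>)
  from this[folded One_nat_def] show ?thesis
    by (rule computable_cong) (auto simp: length_Suc_conv)
qed

lemma computable_rec_nat2:
  assumes "computable m 1 (\<lambda>os xs. g (xs ! 0))"
    and "computable m 3 (\<lambda>os xs. h (xs ! 0) (xs ! 1) (xs ! 2))"
  shows "computable m 2 (\<lambda>os xs. rec_nat (g (xs ! 1)) (\<lambda>n y. h n y (xs ! 1)) (xs ! 0))"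
proof -
  have "computable m (Suc 1) (\<lambda>os xs. rec_nat (g (tl xs ! 0))
      (\<lambda>n y. h ((n # y # tl xs) ! 0) ((n # y # tl xs) ! 1) ((n # y # tl xs) ! 2)) (hd xs))"
    by (rule computable_rec_nat) (use assms in \<open>simp_all add: numeral_eq_Suc\<close>)
  from this[unfolded Suc_1] show ?thesis
    by (rule computable_cong) (auto simp: length_Suc_conv numeral_2_eq_2)
qed

lemma computable_add:
  assumes "computable m k F" "computable m k G"
  shows "computable m k (\<lambda>os xs. F os xs + G os xs)"
proof -
  have "rec_nat b (\<lambda>_ y. Suc y) a = a + b" for a b :: nat
    by (induction a) simp_all
  moreover have "computable m 2 (\<lambda>os xs. rec_nat (xs ! 1) (\<lambda>_ y. Suc y) (xs ! 0))"
    using computable_rec_nat2[of m id "\<lambda>_ y _. Suc y"]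
    by (simp add: computable_proj computable_Suc)
  ultimately have "computable m 2 (\<lambda>os xs. xs ! 0 + xs ! 1)"
    by simp
  from computable_compose2[OF this assms] show ?thesis
    by simp
qed

lemma computable_mult:
  assumes "computable m k F" "computable m k G"
  shows "computable m k (\<lambda>os xs. F os xs * G os xs)"
proof -
  have "rec_nat 0 (\<lambda>_ y. y + b) a = a * b" for a b :: nat
    by (induction a) simp_all
  moreover have "computable m 2 (\<lambda>os xs. rec_nat 0 (\<lambda>_ y. y + xs ! 1) (xs ! 0))"
    using computable_rec_nat2[of m "\<lambda>_. 0" "\<lambda>_ y b. y + b"]
    by (simp add: computable_proj computable_add computable_zero)
  ultimately have "computable m 2 (\<lambda>os xs. xs ! 0 * xs ! 1)"
    by simp
  from computable_compose2[OF this assms] show ?thesis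
    by simp
qed

lemma computable_pred:
  assumes "computable m k F"
  shows "computable m k (\<lambda>os xs. F os xs - 1)"
proof -
  have "rec_nat 0 (\<lambda>n _. n) a = a - 1" for a :: nat
    by (cases a) simp_all
  moreover have "computable m 1 (\<lambda>os xs. rec_nat 0 (\<lambda>n _. n) (xs ! 0))"
    by (rule computable_rec_nat1) (simp add: computable_proj)
  ultimately have "computable m 1 (\<lambda>os xs. xs ! 0 - 1)"
    by simp
  from computable_compose1[OF this assms] show ?thesis
    by simp
qed

lemma computable_diff:
  assumes "computable m k F" "computable m k G"
  shows "computable m k (\<lambda>os xs. F os xs - G os xs)"
proof -
  have "rec_nat b (\<lambda>_ y. y - 1) a = b - a" for a b :: nat
    by (induction a) simp_all
  moreover have "computable m 2 (\<lambda>os xs. rec_nat (xs ! 1) (\<lambda>_ y. y - 1) (xs ! 0))"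
    using computable_rec_nat2[of m "\<lambda>x. x" "\<lambda>_ y _. y - 1"]
      computable_pred[OF computable_proj[of 1 3 m]] computable_proj[of 0 1 m]
    by simp
  ultimately have "computable m 2 (\<lambda>os xs. xs ! 1 - xs ! 0)"
    by simp
  from computable_compose2[OF this assms(2,1)] show ?thesis
    by simp
qed

lemma computable_pow2:
  assumes "computable m k F"
  shows "computable m k (\<lambda>os xs. 2 ^ F os xs)"
proof -
  have "rec_nat 1 (\<lambda>_ y. y + y) a = (2 :: nat) ^ a" for a
    by (induction a) simp_all
  moreover have "computable m 1 (\<lambda>os xs. rec_nat 1 (\<lambda>_ y. y + y) (xs ! 0))"
    by (rule computable_rec_nat1) (simp add: computable_proj computable_add)
  ultimately have "computable m 1 (\<lambda>os xs. 2 ^ (xs ! 0))"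
    by simp
  from computable_compose1[OF this assms] show ?thesis
    by simp
qed

lemma computable_mod2:
  assumes "computable m k F"
  shows "computable m k (\<lambda>os xs. F os xs mod 2)"
proof -
  have "rec_nat 0 (\<lambda>_ y. 1 - y) a = a mod 2" for a :: nat
    by (induction a) (simp_all add: mod_Suc)
  moreover have "computable m 1 (\<lambda>os xs. rec_nat 0 (\<lambda>_ y. 1 - y) (xs ! 0))"
    by (rule computable_rec_nat1) (simp add: computable_proj computable_diff computable_const)
  ultimately have "computable m 1 (\<lambda>os xs. xs ! 0 mod 2)"
    by simp
  from computable_compose1[OF this assms] show ?thesis
    by simp
qed

lemma computable_div2:
  assumes "computable m k F"
  shows "computable m k (\<lambda>os xs. F os xs div 2)"
proof -
  have "rec_nat 0 (\<lambda>n y. y + n mod 2) a = a div 2" for a :: nat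
  proof (induction a)
    case (Suc a)
    then show ?case
      by (cases "even a") (simp_all add: even_Suc_div_two odd_Suc_div_two odd_iff_mod_2_eq_one)
  qed simp
  moreover have "computable m 1 (\<lambda>os xs. rec_nat 0 (\<lambda>n y. y + n mod 2) (xs ! 0))"
    by (rule computable_rec_nat1) (simp add: computable_proj computable_add computable_mod2)
  ultimately have "computable m 1 (\<lambda>os xs. xs ! 0 div 2)"
    by simp
  from computable_compose1[OF this assms] show ?thesis
    by simp
qed

lemma computable_div_pow2:
  assumes "computable m k F" "computable m k G"
  shows "computable m k (\<lambda>os xs. F os xs div 2 ^ G os xs)"
proof -
  have "rec_nat b (\<lambda>_ y. y div 2) a = b div 2 ^ a" for a b :: nat
    by (induction a) (simp_all add: div_mult2_eq[symmetric] mult.commute)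
  moreover have "computable m 2 (\<lambda>os xs. rec_nat (xs ! 1) (\<lambda>_ y. y div 2) (xs ! 0))"
    using computable_rec_nat2[of m "\<lambda>x. x" "\<lambda>_ y _. y div 2"]
    by (simp add: computable_proj computable_div2)
  ultimately have "computable m 2 (\<lambda>os xs. xs ! 1 div 2 ^ xs ! 0)"
    by simp
  from computable_compose2[OF this assms(2,1)] show ?thesis
    by simp
qed

lemma decidable_eq:
  assumes "computable m k F" "computable m k G"
  shows "decidable m k (\<lambda>os xs. F os xs = G os xs)"
proof -
  have "computable m k (\<lambda>os xs. 1 - ((F os xs - G os xs) + (G os xs - F os xs)))"
    by (intro computable_diff computable_add computable_const assms)
  then show ?thesis
    unfolding decidable_def by (rule computable_cong) auto
qed

lemma decidable_less:
  assumes "computable m k F" "computable m k G"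
  shows "decidable m k (\<lambda>os xs. F os xs < G os xs)"
proof -
  have "computable m k (\<lambda>os xs. 1 - (1 - (G os xs - F os xs)))"
    by (intro computable_diff computable_const assms)
  then show ?thesis
    unfolding decidable_def by (rule computable_cong) auto
qed

lemma decidable_le:
  assumes "computable m k F" "computable m k G"
  shows "decidable m k (\<lambda>os xs. F os xs \<le> G os xs)"
  using decidable_less[OF assms(1) computable_Suc[OF assms(2)]]
  by (rule decidable_cong) (simp add: less_Suc_eq_le)

lemma decidable_const: "decidable m k (\<lambda>os xs. b)"
  unfolding decidable_def by (rule computable_const)

lemma decidable_not:
  assumes "decidable m k P"
  shows "decidable m k (\<lambda>os xs. \<not> P os xs)"
proof -
  have "computable m k (\<lambda>os xs. 1 - of_bool (P os xs))"
    using assms unfolding decidable_def by (intro computable_diff computable_const)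
  then show ?thesis
    unfolding decidable_def by (rule computable_cong) simp
qed

lemma decidable_conj:
  assumes "decidable m k P" "decidable m k Q"
  shows "decidable m k (\<lambda>os xs. P os xs \<and> Q os xs)"
proof -
  have "computable m k (\<lambda>os xs. of_bool (P os xs) * of_bool (Q os xs))"
    using assms unfolding decidable_def by (rule computable_mult)
  then show ?thesis
    unfolding decidable_def by (rule computable_cong) simp
qed

lemma decidable_disj:
  assumes "decidable m k P" "decidable m k Q"
  shows "decidable m k (\<lambda>os xs. P os xs \<or> Q os xs)"
  using decidable_not[OF decidable_conj[OF decidable_not[OF assms(1)] decidable_not[OF assms(2)]]]
  by (rule decidable_cong) simp

lemma decidable_iff:
  assumes "decidable m k P" "decidable m k Q"
  shows "decidable m k (\<lambda>os xs. P os xs \<longleftrightarrow> Q os xs)"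
  using decidable_eq[OF assms[unfolded decidable_def]]
  by (rule decidable_cong) simp

lemma computable_if:
  assumes "decidable m k P" "computable m k F" "computable m k G"
  shows "computable m k (\<lambda>os xs. if P os xs then F os xs else G os xs)"
proof -
  have "computable m k (\<lambda>os xs. of_bool (P os xs) * F os xs + (1 - of_bool (P os xs)) * G os xs)"
    using assms unfolding decidable_def
    by (intro computable_add computable_mult computable_diff computable_const)
  then show ?thesis
    by (rule computable_cong) simp
qed

lemma decidable_oracle:
  assumes "i < m" "computable m k F"
  shows "decidable m k (\<lambda>os xs. (os ! i) (F os xs))"
  using computable_compose1[OF decidable_oracle_hd[OF assms(1), unfolded decidable_def] assms(2)]
  unfolding decidable_def by simp

lemma decidable_bit:
  assumes "computable m k F" "computable m k G"
  shows "decidable m k (\<lambda>os xs. bit (F os xs) (G os xs))"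
  using decidable_eq[OF computable_mod2[OF computable_div_pow2[OF assms]] computable_const[of m k 1]]
  by (rule decidable_cong) (simp add: bit_iff_odd odd_iff_mod_2_eq_one)

lemma computable_bounded_sum:
  assumes "computable m (Suc k) F" "computable m k B"
  shows "computable m k (\<lambda>os xs. \<Sum>i<B os xs. F os (i # xs))"
proof -
  have "rec_nat 0 (\<lambda>i y. y + f i) n = (\<Sum>i<n. f i)" for n and f :: "nat \<Rightarrow> nat"
    by (induction n) simp_all
  moreover have "computable m (Suc k) (\<lambda>os xs. rec_nat 0
      (\<lambda>i y. (i # y # tl xs) ! 1 + F os ((i # y # tl xs) ! 0 # drop 2 (i # y # tl xs))) (hd xs))"
    by (intro computable_rec_nat computable_add computable_proj computable_drop_snd assms(1)
        computable_zero) simp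
  ultimately have "computable m (Suc k) (\<lambda>os xs. \<Sum>i<hd xs. F os (i # tl xs))"
    by simp
  from computable_subst_hd[OF this assms(2)] show ?thesis
    by simp
qed

lemma decidable_bex:
  assumes "decidable m (Suc k) P" "computable m k B"
  shows "decidable m k (\<lambda>os xs. \<exists>i<B os xs. P os (i # xs))"
proof -
  have "(\<Sum>i<n. of_bool (p i) :: nat) > 0 \<longleftrightarrow> (\<exists>i<n. p i)" for n :: nat and p
    by (induction n) (auto simp: less_Suc_eq)
  moreover have "decidable m k (\<lambda>os xs. 0 < (\<Sum>i<B os xs. of_bool (P os (i # xs)) :: nat))"
    using assms unfolding decidable_def
    by (intro decidable_less[unfolded decidable_def] computable_zero computable_bounded_sum)
  ultimately show ?thesis
    by simp
qed

lemma decidable_ball: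
  assumes "decidable m (Suc k) P" "computable m k B"
  shows "decidable m k (\<lambda>os xs. \<forall>i<B os xs. P os (i # xs))"
  using decidable_not[OF decidable_bex[OF decidable_not[OF assms(1)] assms(2)]]
  by (rule decidable_cong) simp

lemma decidable_list_all:
  assumes "\<And>x. x \<in> set ys \<Longrightarrow> decidable m k (P x)"
  shows "decidable m k (\<lambda>os xs. \<forall>x\<in>set ys. P x os xs)"
  using assms by (induction ys) (auto intro: decidable_conj decidable_const)

section \<open>Clocked evaluation\<close>

text \<open>The value found by \<open>Mn\<close> is written as a count rather than a least element, so
  that its simulation below is a bounded sum.\<close>

primrec clocked_eval :: "recf \<Rightarrow> nat \<Rightarrow> cantor list \<Rightarrow> nat list \<Rightarrow> nat option" where
  "clocked_eval Z t os xs = Some 0"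
| "clocked_eval S t os xs = (case xs of [] \<Rightarrow> None | x # _ \<Rightarrow> Some (Suc x))"
| "clocked_eval (Proj i) t os xs = (if i < length xs then Some (xs ! i) else None)"
| "clocked_eval (Orc i) t os xs = (case xs of [] \<Rightarrow> None | x # _ \<Rightarrow>
      if i < length os \<and> x < t then Some (if (os ! i) x then 1 else 0) else None)"
| "clocked_eval (Cn f gs) t os xs =
      (if None \<in> set (map (\<lambda>g. clocked_eval g t os xs) gs) then None
       else clocked_eval f t os (map (\<lambda>g. the (clocked_eval g t os xs)) gs))"
| "clocked_eval (Pr f g) t os xs = (case xs of [] \<Rightarrow> None | n # ys \<Rightarrow>
      rec_nat (clocked_eval f t os ys) (\<lambda>k r. Option.bind r (\<lambda>y. clocked_eval g t os (k # y # ys))) n)"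
| "clocked_eval (Mn f) t os xs =
      (if \<exists>n<t. clocked_eval f t os (n # xs) = Some 0
              \<and> (\<forall>m<n. \<exists>k. clocked_eval f t os (m # xs) = Some (Suc k))
       then Some (\<Sum>m<t. if \<forall>m'\<le>m. \<exists>k. clocked_eval f t os (m' # xs) = Some (Suc k) then 1 else 0)
       else None)"

lemma sum_prefix_indicator_eq:
  assumes "\<forall>m<n. P m" "\<not> P n" "n < t"
  shows "(\<Sum>m<t. if \<forall>m'\<le>m. P m' then 1 else 0 :: nat) = n"
proof -
  have "(\<forall>m'\<le>m. P m') \<longleftrightarrow> m < n" for m
    using assms(1,2) by (meson le_less_trans less_le_not_le nat_le_linear)
  then have "(\<Sum>m<t. if \<forall>m'\<le>m. P m' then 1 else 0 :: nat) = card {m. m < t \<and> m < n}"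
    by (simp add: sum.If_cases[of _ "\<lambda>m. m < n"] Int_def conj_commute)
  also have "{m. m < t \<and> m < n} = {..<n}"
    using assms(3) by auto
  finally show ?thesis
    by simp
qed

lemma clocked_eval_Mn_Some_iff:
  "clocked_eval (Mn f) t os xs = Some n \<longleftrightarrow>
    n < t \<and> clocked_eval f t os (n # xs) = Some 0
      \<and> (\<forall>m<n. \<exists>k. clocked_eval f t os (m # xs) = Some (Suc k))"
  (is "_ \<longleftrightarrow> ?first_zero n")
proof -
  have count: "(\<Sum>m<t. if \<forall>m'\<le>m. \<exists>k. clocked_eval f t os (m' # xs) = Some (Suc k) then 1 else 0) = n"
    if "?first_zero n" for n
    using that by (intro sum_prefix_indicator_eq) auto
  show ?thesis
  proof
    assume "clocked_eval (Mn f) t os xs = Some n"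
    then obtain n' where "?first_zero n'" "clocked_eval (Mn f) t os xs = Some n'"
      using count by (auto split: if_splits)
    with \<open>clocked_eval (Mn f) t os xs = Some n\<close> show "?first_zero n"
      by simp
  next
    assume "?first_zero n"
    with count[OF this] show "clocked_eval (Mn f) t os xs = Some n"
      by auto
  qed
qed

lemma rec_nat_bind_mono:
  assumes "\<And>y. A = Some y \<Longrightarrow> A' = Some y"
    and "\<And>k y z. G k y = Some z \<Longrightarrow> G' k y = Some z"
  shows "rec_nat A (\<lambda>k r. Option.bind r (G k)) n = Some z \<Longrightarrow>
    rec_nat A' (\<lambda>k r. Option.bind r (G' k)) n = Some z"
  by (induction n arbitrary: z) (auto simp: bind_eq_Some_conv assms)

lemma clocked_eval_mono:
  "clocked_eval f t os xs = Some y \<Longrightarrow> t \<le> t' \<Longrightarrow> clocked_eval f t' os xs = Some y"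
proof (induction f arbitrary: xs y)
  case (Orc i)
  then show ?case
    by (auto split: list.splits if_splits)
next
  case (Cn f gs)
  have defined: "None \<notin> set (map (\<lambda>g. clocked_eval g t os xs) gs)"
    using Cn.prems by (auto split: if_splits)
  have args: "map (\<lambda>g. clocked_eval g t' os xs) gs = map (\<lambda>g. clocked_eval g t os xs) gs"
  proof (rule map_cong)
    fix g
    assume g: "g \<in> set gs"
    then obtain v where "clocked_eval g t os xs = Some v"
      using defined by (cases "clocked_eval g t os xs") force+
    then show "clocked_eval g t' os xs = clocked_eval g t os xs"
      using Cn.IH(2)[OF g] Cn.prems(2) by simp
  qed simp
  then have results:
    "map (\<lambda>g. the (clocked_eval g t' os xs)) gs = map (\<lambda>g. the (clocked_eval g t os xs)) gs"
    using arg_cong[OF args, of "map the"] by (simp add: comp_def)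
  have "clocked_eval f t os (map (\<lambda>g. the (clocked_eval g t os xs)) gs) = Some y"
    using Cn.prems(1) defined by simp
  from Cn.IH(1)[OF this Cn.prems(2)] show ?case
    by (simp only: clocked_eval.simps args results defined if_False)
next
  case (Pr f g)
  then show ?case
    by (auto split: list.splits elim!: rec_nat_bind_mono[rotated 2])
next
  case (Mn f)
  from Mn.prems(1) have "y < t" "clocked_eval f t os (y # xs) = Some 0"
    "\<forall>m<y. \<exists>k. clocked_eval f t os (m # xs) = Some (Suc k)"
    unfolding clocked_eval_Mn_Some_iff by simp_all
  with Mn.IH Mn.prems(2) show ?case
    unfolding clocked_eval_Mn_Some_iff by (blast intro: less_le_trans)
qed simp_all

lemma clocked_eval_None_antimono:
  "clocked_eval f t' os xs = None \<Longrightarrow> t \<le> t' \<Longrightarrow> clocked_eval f t os xs = None"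
  using clocked_eval_mono[of f t os xs _ t'] by (cases "clocked_eval f t os xs") auto

lemma clocked_eval_use:
  assumes "length os = length os'" "\<And>i x. i < length os \<Longrightarrow> x < t \<Longrightarrow> (os ! i) x = (os' ! i) x"
  shows "clocked_eval f t os xs = clocked_eval f t os' xs"
proof (induction f arbitrary: xs)
  case (Orc i)
  then show ?case
    using assms by (auto split: list.splits)
next
  case (Cn f gs)
  have args: "map (\<lambda>g. clocked_eval g t os xs) gs = map (\<lambda>g. clocked_eval g t os' xs) gs"
    by (rule map_cong) (use Cn.IH(2) in auto)
  then have "map (\<lambda>g. the (clocked_eval g t os xs)) gs = map (\<lambda>g. the (clocked_eval g t os' xs)) gs"
    using arg_cong[OF args, of "map the"] by (simp add: comp_def)
  with args show ?case
    by (simp only: clocked_eval.simps Cn.IH(1))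
next
  case (Pr f g)
  then show ?case
    by (simp split: list.splits)
next
  case (Mn f)
  then show ?case
    by simp blast
qed simp_all

lemma reval_Pr_if_rec_nat_bind:
  assumes "\<And>y. A = Some y \<Longrightarrow> reval os f ys y"
    and "\<And>k y z. G k y = Some z \<Longrightarrow> reval os g (k # y # ys) z"
  shows "rec_nat A (\<lambda>k r. Option.bind r (G k)) n = Some z \<Longrightarrow> reval os (Pr f g) (n # ys) z"
  by (induction n arbitrary: z) (auto simp: bind_eq_Some_conv intro: assms reval.pr0 reval.prS)

lemma clocked_eval_sound:
  "clocked_eval f t os xs = Some y \<Longrightarrow> reval os f xs y"
proof (induction f arbitrary: xs y)
  case Z
  then show ?case
    by (auto intro: reval.zero)
next
  case S
  then show ?case
    by (auto split: list.splits intro: reval.succ)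
next
  case (Proj i)
  then show ?case
    by (auto split: if_splits intro: reval.proj)
next
  case (Orc i)
  then obtain x xs' where "xs = x # xs'" "i < length os" "y = (if (os ! i) x then 1 else 0)"
    by (auto split: list.splits if_splits)
  then show ?case
    using reval.orc[of i os x xs'] by simp
next
  case (Cn f gs)
  have defined: "None \<notin> set (map (\<lambda>g. clocked_eval g t os xs) gs)"
    using Cn.prems by (auto split: if_splits)
  have "list_all2 (\<lambda>g y. reval os g xs y) gs (map (\<lambda>g. the (clocked_eval g t os xs)) gs)"
    unfolding list_all2_conv_all_nth
  proof (intro conjI allI impI)
    fix j
    assume j: "j < length gs"
    then have "clocked_eval (gs ! j) t os xs \<in> set (map (\<lambda>g. clocked_eval g t os xs) gs)"
      by simp
    then have "clocked_eval (gs ! j) t os xs \<noteq> None"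
      using defined by metis
    then show "reval os (gs ! j) xs (map (\<lambda>g. the (clocked_eval g t os xs)) gs ! j)"
      using Cn.IH(2) j by auto
  qed simp
  moreover have "reval os f (map (\<lambda>g. the (clocked_eval g t os xs)) gs) y"
    by (rule Cn.IH(1)) (use Cn.prems defined in \<open>auto split: if_splits\<close>)
  ultimately show ?case
    by (rule reval.cn)
next
  case (Pr f g)
  then show ?case
    by (auto split: list.splits elim!: reval_Pr_if_rec_nat_bind[rotated 2])
next
  case (Mn f)
  from Mn.prems have "clocked_eval f t os (y # xs) = Some 0"
    "\<forall>m<y. \<exists>k. clocked_eval f t os (m # xs) = Some (Suc k)"
    unfolding clocked_eval_Mn_Some_iff by simp_all
  with Mn.IH show ?case
    by (blast intro: reval.mn)
qed

lemma clocked_eval_uniform: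
  fixes n :: nat
  assumes "\<forall>j<n. \<exists>t. clocked_eval (fs j) t os (xss j) = Some (ys j)"
  shows "\<exists>T. \<forall>j<n. clocked_eval (fs j) T os (xss j) = Some (ys j)"
  using assms
proof (induction n)
  case (Suc n)
  then obtain T t where T: "\<forall>j<n. clocked_eval (fs j) T os (xss j) = Some (ys j)"
    and t: "clocked_eval (fs n) t os (xss n) = Some (ys n)"
    by auto
  have "clocked_eval (fs j) (max T t) os (xss j) = Some (ys j)" if "j < Suc n" for j
  proof (cases "j = n")
    case True
    then show ?thesis
      using clocked_eval_mono[OF t] by simp
  next
    case False
    then show ?thesis
      using that T clocked_eval_mono[of "fs j" T os "xss j" "ys j"] by simp
  qed
  then show ?case
    by blast
qed simp

lemma clocked_eval_complete:
  "reval os f xs y \<Longrightarrow> \<exists>t. clocked_eval f t os xs = Some y"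
proof (induction rule: reval.induct)
  case (orc i x xs)
  then show ?case
    by (intro exI[of _ "Suc x"]) simp
next
  case (cn xs gs ys f z)
  have "\<forall>j<length gs. \<exists>t. clocked_eval (gs ! j) t os xs = Some (ys ! j)"
    using cn.IH(1) by (auto simp: list_all2_conv_all_nth)
  then obtain T where T: "\<forall>j<length gs. clocked_eval (gs ! j) T os xs = Some (ys ! j)"
    using clocked_eval_uniform[of "length gs" "\<lambda>j. gs ! j" os "\<lambda>_. xs" "\<lambda>j. ys ! j"] by blast
  obtain t where t: "clocked_eval f t os ys = Some z"
    using cn.IH(2) by blast
  have "length gs = length ys"
    using cn.IH(1) by (rule list_all2_lengthD)
  then have args: "map (\<lambda>g. clocked_eval g (max T t) os xs) gs = map Some ys"
    using T by (intro nth_equalityI) (auto intro: clocked_eval_mono)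
  have "map (\<lambda>g. the (clocked_eval g (max T t) os xs)) gs = map the (map Some ys)"
    unfolding args[symmetric] by simp
  then have "map (\<lambda>g. the (clocked_eval g (max T t) os xs)) gs = ys"
    by (simp add: comp_def)
  with args have "clocked_eval (Cn f gs) (max T t) os xs = Some z"
    using clocked_eval_mono[OF t, of "max T t"] by auto
  then show ?case ..
next
  case (prS f g n xs y z)
  obtain t1 t2 where t1: "clocked_eval (Pr f g) t1 os (n # xs) = Some y"
    and t2: "clocked_eval g t2 os (n # y # xs) = Some z"
    using prS.IH by blast
  have "clocked_eval (Pr f g) (max t1 t2) os (n # xs) = Some y"
    by (rule clocked_eval_mono[OF t1]) simp
  moreover have "clocked_eval g (max t1 t2) os (n # y # xs) = Some z"
    by (rule clocked_eval_mono[OF t2]) simp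
  ultimately have "clocked_eval (Pr f g) (max t1 t2) os (Suc n # xs) = Some z"
    by simp
  then show ?case ..
next
  case (mn f n xs)
  have "\<forall>m<n. \<exists>k t. clocked_eval f t os (m # xs) = Some (Suc k)"
    using mn(3) by blast
  then obtain v where "\<forall>m<n. \<exists>t. clocked_eval f t os (m # xs) = Some (Suc (v m))"
    by metis
  then obtain T where T: "\<forall>m<n. clocked_eval f T os (m # xs) = Some (Suc (v m))"
    using clocked_eval_uniform[of n "\<lambda>_. f" os "\<lambda>m. m # xs" "\<lambda>m. Suc (v m)"] by blast
  obtain t0 where t0: "clocked_eval f t0 os (n # xs) = Some 0"
    using mn(2) by blast
  define t where "t = max (max T t0) (Suc n)"
  have zero: "clocked_eval f t os (n # xs) = Some 0"
    using clocked_eval_mono[OF t0] unfolding t_def by simp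
  have pos: "\<forall>m<n. clocked_eval f t os (m # xs) = Some (Suc (v m))"
    using T clocked_eval_mono[of f T os _ _ t] unfolding t_def by simp
  have "n < t"
    unfolding t_def by simp
  with zero pos have "clocked_eval (Mn f) t os xs = Some n"
    unfolding clocked_eval_Mn_Some_iff by simp
  then show ?case ..
qed auto

lemma reval_deterministic: "reval os f xs y \<Longrightarrow> reval os f xs y' \<Longrightarrow> y = y'"
proof -
  assume "reval os f xs y" "reval os f xs y'"
  then obtain t t' where "clocked_eval f t os xs = Some y" "clocked_eval f t' os xs = Some y'"
    using clocked_eval_complete by blast
  then have "clocked_eval f (max t t') os xs = Some y" "clocked_eval f (max t t') os xs = Some y'"
    by (auto elim: clocked_eval_mono)
  then show "y = y'"
    by simp
qed

lemma halts_iff_clocked_eval: "halts os f xs \<longleftrightarrow> (\<exists>t. clocked_eval f t os xs \<noteq> None)"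
  unfolding halts_def using clocked_eval_complete clocked_eval_sound by blast

lemma ex_not_halts_iff_clocked_eval:
  "(\<exists>j<n. \<not> halts os f [j]) \<longleftrightarrow> (\<forall>t. \<exists>j<n. clocked_eval f t os [j] = None)"
proof
  assume "\<exists>j<n. \<not> halts os f [j]"
  then show "\<forall>t. \<exists>j<n. clocked_eval f t os [j] = None"
    by (auto simp: halts_iff_clocked_eval)
next
  assume none: "\<forall>t. \<exists>j<n. clocked_eval f t os [j] = None"
  show "\<exists>j<n. \<not> halts os f [j]"
  proof (rule ccontr)
    assume "\<not> (\<exists>j<n. \<not> halts os f [j])"
    then obtain v where "\<forall>j<n. reval os f [j] (v j)"
      unfolding halts_def by metis
    then have "\<forall>j<n. \<exists>t. clocked_eval f t os [j] = Some (v j)"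
      using clocked_eval_complete by blast
    then obtain T where "\<forall>j<n. clocked_eval f T os [j] = Some (v j)"
      using clocked_eval_uniform[of n "\<lambda>_. f" os "\<lambda>j. [j]" v] by blast
    with none show False
      by (metis option.distinct(1))
  qed
qed

definition code_option :: "nat option \<Rightarrow> nat" where
  "code_option r = (case r of None \<Rightarrow> 0 | Some y \<Rightarrow> Suc y)"

lemma code_option_simps [simp]:
  "code_option None = 0" "code_option (Some y) = Suc y"
  by (simp_all add: code_option_def)

lemma code_option_eq_0_iff: "code_option r = 0 \<longleftrightarrow> r = None"
  by (cases r) auto

lemma code_option_eq_1_iff: "code_option r = 1 \<longleftrightarrow> r = Some 0"
  by (cases r) auto

lemma code_option_ge_2_iff: "2 \<le> code_option r \<longleftrightarrow> (\<exists>k. r = Some (Suc k))"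
  by (cases r) (auto, presburger)

lemma code_option_rec_nat_bind:
  "code_option (rec_nat A (\<lambda>k r. Option.bind r (G k)) n)
   = rec_nat (code_option A) (\<lambda>k v. if v = 0 then 0 else code_option (G k (v - 1))) n"
proof (induction n)
  case (Suc n)
  then show ?case
    by (cases "rec_nat A (\<lambda>k r. Option.bind r (G k)) n") (simp_all add: eq_commute[of "Suc _"])
qed simp

text \<open>This replaces a universal machine: for each fixed code its clocked evaluation is
  computable, by induction on the code. The oracles of the simulated run are computed from the
  actual oracles and the parameters \<open>env\<close>; this is how reals coded by a number are queried
  in the connectedness argument.\<close>

locale oracle_substitution =
  fixes Os :: "cantor list \<Rightarrow> nat list \<Rightarrow> cantor list" and m r m' :: nat
  assumes length_Os: "length os = m \<Longrightarrow> length env = r \<Longrightarrow> length (Os os env) = m'"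
    and decidable_Os: "i < m' \<Longrightarrow> decidable m (Suc r) (\<lambda>os a. (Os os (take r a) ! i) (a ! r))"
begin

text \<open>The argument list is \<open>xs @ [t] @ env\<close> with \<open>length xs = L\<close>.\<close>

definition clocked_value :: "recf \<Rightarrow> nat \<Rightarrow> cantor list \<Rightarrow> nat list \<Rightarrow> nat" where
  "clocked_value g L os a =
     code_option (clocked_eval g (a ! L) (Os os (drop (Suc L) a)) (take L a))"

lemma clocked_value_append:
  "length ys = L \<Longrightarrow>
    clocked_value f L os (ys @ b) = code_option (clocked_eval f (b ! 0) (Os os (drop 1 b)) ys)"
  by (simp add: clocked_value_def nth_append)

lemma computable_clocked_value_Z: "computable m (L + Suc r) (clocked_value Z L)"
  by (rule computable_cong[OF computable_const[of m _ 1]]) (simp add: clocked_value_def)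

lemma computable_clocked_value_S: "computable m (L + Suc r) (clocked_value S L)"
proof -
  have "computable m (L + Suc r) (\<lambda>os a. if L = 0 then 0 else Suc (Suc (a ! 0)))"
    by (cases L) (auto intro!: computable_const computable_Suc computable_proj)
  then show ?thesis
  proof (rule computable_cong)
    fix os :: "cantor list" and a :: "nat list"
    assume "length a = L + Suc r"
    then obtain x a' where "a = x # a'"
      by (cases a) auto
    then show "(if L = 0 then 0 else Suc (Suc (a ! 0))) = clocked_value S L os a"
      by (cases L) (auto simp: clocked_value_def)
  qed
qed

lemma computable_clocked_value_Proj: "computable m (L + Suc r) (clocked_value (Proj i) L)"
proof -
  have "computable m (L + Suc r) (\<lambda>os a. if i < L then Suc (a ! i) else 0)"
    by (cases "i < L") (auto intro!: computable_const computable_Suc computable_proj)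
  then show ?thesis
    by (rule computable_cong) (auto simp: clocked_value_def min_def)
qed

lemma clocked_value_Orc:
  assumes "length os = m" "length a = L + Suc r"
  shows "clocked_value (Orc i) L os a = (if L = 0 \<or> \<not> i < m' then 0
    else if a ! 0 < a ! L then Suc (of_bool ((Os os (drop (Suc L) a) ! i) (a ! 0))) else 0)"
proof (cases L)
  case 0
  then show ?thesis
    by (simp add: clocked_value_def)
next
  case (Suc L')
  moreover obtain x a' where "a = x # a'"
    using assms(2) by (cases a) auto
  moreover have "length (Os os (drop (Suc L) a)) = m'"
    using length_Os assms by simp
  ultimately show ?thesis
    by (auto simp: clocked_value_def)
qed

lemma clocked_value_Cn:
  assumes "L < length a"
  shows "clocked_value (Cn f gs) L os a = (if \<forall>g\<in>set gs. clocked_value g L os a \<noteq> 0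
    then clocked_value f (length gs) os (map (\<lambda>g. clocked_value g L os a - 1) gs @ drop L a) else 0)"
proof -
  define t Ov xs where "t = a ! L" and "Ov = Os os (drop (Suc L) a)" and "xs = take L a"
  have value_g: "clocked_value g L os a = code_option (clocked_eval g t Ov xs)" for g
    by (simp add: clocked_value_def t_def Ov_def xs_def)
  have rest: "drop L a ! 0 = t" "drop 1 (drop L a) = drop (Suc L) a"
    using assms by (simp_all add: t_def)
  show ?thesis
  proof (cases "\<forall>g\<in>set gs. clocked_value g L os a \<noteq> 0")
    case True
    then have defined: "None \<notin> set (map (\<lambda>g. clocked_eval g t Ov xs) gs)"
      by (auto simp: value_g code_option_eq_0_iff)
    have results: "map (\<lambda>g. clocked_value g L os a - 1) gs = map (\<lambda>g. the (clocked_eval g t Ov xs)) gs"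
      by (rule map_cong) (use True in \<open>auto simp: value_g code_option_def split: option.splits\<close>)
    show ?thesis
      using True defined
      by (simp only: results clocked_value_append length_map rest if_True)
        (simp add: clocked_value_def t_def Ov_def xs_def)
  next
    case False
    then obtain g where "g \<in> set gs" "clocked_eval g t Ov xs = None"
      by (auto simp: value_g code_option_eq_0_iff)
    then have "None \<in> set (map (\<lambda>g. clocked_eval g t Ov xs) gs)"
      by (auto simp: image_iff intro!: bexI[of _ g])
    with False show ?thesis
      by (simp add: clocked_value_def t_def Ov_def xs_def) auto
  qed
qed

lemma clocked_value_Pr:
  "clocked_value (Pr f g) 0 os a = 0"
  "clocked_value (Pr f g) (Suc L) os (x # a) = rec_nat (clocked_value f L os a)
    (\<lambda>k v. if v = 0 then 0 else clocked_value g (Suc (Suc L)) os (k # (v - 1) # a)) x"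
  by (simp_all add: clocked_value_def code_option_rec_nat_bind cong: if_cong)

lemma clocked_value_Mn:
  "clocked_value (Mn f) L os a =
    (if \<exists>n<a ! L. clocked_value f (Suc L) os (n # a) = 1 \<and> (\<forall>i<n. 2 \<le> clocked_value f (Suc L) os (i # a))
     then Suc (\<Sum>n<a ! L. of_bool (\<forall>i\<le>n. 2 \<le> clocked_value f (Suc L) os (i # a))) else 0)"
proof -
  have value_f: "clocked_value f (Suc L) os (n # a)
      = code_option (clocked_eval f (a ! L) (Os os (drop (Suc L) a)) (n # take L a))" for n
    by (simp add: clocked_value_def)
  show ?thesis
    by (simp only: value_f code_option_eq_1_iff code_option_ge_2_iff)
      (simp add: clocked_value_def of_bool_def, blast)
qed

lemma decidable_Os_drop:
  assumes "i < m'"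
  shows "decidable m (L + Suc r) (\<lambda>os a. (Os os (drop (Suc L) a) ! i) (a ! 0))"
proof -
  define idx where "idx = [Suc L..<Suc L + r] @ [0]"
  have "length idx = Suc r" "\<forall>j\<in>set idx. j < L + Suc r"
    by (auto simp: idx_def)
  then have "computable m (L + Suc r)
      (\<lambda>os a. of_bool ((Os os (take r (map ((!) a) idx)) ! i) (map ((!) a) idx ! r)))"
    using computable_reindex[of m idx "\<lambda>os xs. of_bool ((Os os (take r xs) ! i) (xs ! r))"]
      decidable_Os[OF assms] unfolding decidable_def by simp
  then show ?thesis
    unfolding decidable_def
  proof (rule computable_cong)
    fix os :: "cantor list" and a :: "nat list"
    assume len: "length a = L + Suc r"
    then have "map ((!) a) [Suc L..<Suc L + r] = drop (Suc L) a"
      using map_nth_upt_drop[of "Suc L" a] by simp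
    with len show "of_bool ((Os os (take r (map ((!) a) idx)) ! i) (map ((!) a) idx ! r))
        = of_bool ((Os os (drop (Suc L) a) ! i) (a ! 0))"
      unfolding idx_def by (simp del: upt_Suc add: nth_append)
  qed
qed

lemma computable_clocked_value_Orc: "computable m (L + Suc r) (clocked_value (Orc i) L)"
proof -
  have "computable m (L + Suc r) (\<lambda>os a. if L = 0 \<or> \<not> i < m' then 0
      else if a ! 0 < a ! L then Suc (of_bool ((Os os (drop (Suc L) a) ! i) (a ! 0))) else 0)"
  proof (cases "L = 0 \<or> \<not> i < m'")
    case True
    then show ?thesis
      using computable_zero by simp
  next
    case False
    then have "computable m (L + Suc r) (\<lambda>os a.
        if a ! 0 < a ! L then Suc (of_bool ((Os os (drop (Suc L) a) ! i) (a ! 0))) else 0)"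
      by (intro computable_if decidable_less computable_proj computable_Suc computable_const
          decidable_Os_drop[unfolded decidable_def]) auto
    with False show ?thesis
      by simp
  qed
  then show ?thesis
    by (rule computable_cong) (simp add: clocked_value_Orc)
qed

lemma computable_clocked_value_Cn:
  assumes f: "\<And>L. computable m (L + Suc r) (clocked_value f L)"
    and gs: "\<And>g L. g \<in> set gs \<Longrightarrow> computable m (L + Suc r) (clocked_value g L)"
  shows "computable m (L + Suc r) (clocked_value (Cn f gs) L)"
proof -
  define Fs where
    "Fs = map (\<lambda>g os a. clocked_value g L os a - 1) gs @ map (\<lambda>i os a. a ! i) [L..<L + Suc r]"
  have "computable m (L + Suc r) (\<lambda>os a. clocked_value f (length gs) os (map (\<lambda>F. F os a) Fs))"
  proof (rule computable_compose)
    show "computable m (length Fs) (clocked_value f (length gs))"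
      using f[of "length gs"] by (simp add: Fs_def)
    show "computable m (L + Suc r) F" if "F \<in> set Fs" for F
      using that gs unfolding Fs_def
      by (auto intro!: computable_pred[unfolded One_nat_def] computable_proj)
  qed
  moreover have "decidable m (L + Suc r) (\<lambda>os a. \<forall>g\<in>set gs. clocked_value g L os a \<noteq> 0)"
    by (intro decidable_list_all decidable_not decidable_eq gs computable_const)
  ultimately have "computable m (L + Suc r) (\<lambda>os a. if \<forall>g\<in>set gs. clocked_value g L os a \<noteq> 0
      then clocked_value f (length gs) os (map (\<lambda>F. F os a) Fs) else 0)"
    by (intro computable_if computable_const)
  moreover have "map (\<lambda>F. F os a) Fs = map (\<lambda>g. clocked_value g L os a - 1) gs @ drop L a"
    if "length a = L + Suc r" for os and a :: "nat list"
    using map_nth_upt_drop[of L a] that by (simp add: Fs_def comp_def)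
  ultimately show ?thesis
    by (elim computable_cong) (auto simp: clocked_value_Cn)
qed

lemma computable_clocked_value_Pr:
  assumes f: "\<And>L. computable m (L + Suc r) (clocked_value f L)"
    and g: "\<And>L. computable m (L + Suc r) (clocked_value g L)"
  shows "computable m (L + Suc r) (clocked_value (Pr f g) L)"
proof (cases L)
  case 0
  show ?thesis
    by (rule computable_cong[OF computable_zero]) (simp add: clocked_value_Pr 0)
next
  case (Suc L')
  define k where "k = L' + Suc r"
  define Fs :: "(cantor list \<Rightarrow> nat list \<Rightarrow> nat) list"
    where "Fs = (\<lambda>os b. b ! 0) # (\<lambda>os b. b ! 1 - 1) # map (\<lambda>i os b. b ! i) [2..<Suc (Suc k)]"
  have "computable m (Suc (Suc k))
      (\<lambda>os b. clocked_value g (Suc (Suc L')) os (map (\<lambda>F. F os b) Fs))"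
  proof (rule computable_compose)
    show "computable m (length Fs) (clocked_value g (Suc (Suc L')))"
      using g[of "Suc (Suc L')"] by (simp del: upt_Suc add: Fs_def k_def)
    show "computable m (Suc (Suc k)) F" if "F \<in> set Fs" for F
      using that unfolding Fs_def
      by (auto simp del: upt_Suc intro!: computable_pred[unfolded One_nat_def] computable_proj)
  qed
  then have "computable m (Suc (Suc k)) (\<lambda>os b. if b ! 1 = 0 then 0
      else clocked_value g (Suc (Suc L')) os (map (\<lambda>F. F os b) Fs))"
    by (intro computable_if decidable_eq computable_proj computable_const) simp_all
  from computable_rec_nat[OF f[of L', folded k_def] this]
  have "computable m (L + Suc r) (\<lambda>os a. rec_nat (clocked_value f L' os (tl a))
      (\<lambda>n y. if y = 0 then 0
        else clocked_value g (Suc (Suc L')) os (map (\<lambda>F. F os (n # y # tl a)) Fs)) (hd a))"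
    by (simp add: Suc k_def)
  then show ?thesis
  proof (rule computable_cong)
    fix os :: "cantor list" and a :: "nat list"
    assume "length a = L + Suc r"
    then obtain x a' where a: "a = x # a'" "length a' = k"
      by (cases a) (auto simp: Suc k_def)
    have args: "map (\<lambda>F. F os (j # y # a')) Fs = j # (y - 1) # a'" for j y
      using map_nth_upt_drop[of 2 "j # y # a'"] a(2) by (simp del: upt_Suc add: Fs_def comp_def)
    show "rec_nat (clocked_value f L' os (tl a)) (\<lambda>n y. if y = 0 then 0
        else clocked_value g (Suc (Suc L')) os (map (\<lambda>F. F os (n # y # tl a)) Fs)) (hd a)
      = clocked_value (Pr f g) L os a"
      unfolding a(1) Suc by (simp add: args clocked_value_Pr cong: if_cong)
  qed
qed

lemma computable_clocked_value_Mn: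
  assumes f: "\<And>L. computable m (L + Suc r) (clocked_value f L)"
  shows "computable m (L + Suc r) (clocked_value (Mn f) L)"
proof -
  define k where "k = L + Suc r"
  let ?v = "clocked_value f (Suc L)"
  have v: "computable m (Suc k) ?v"
    using f[of "Suc L"] by (simp add: k_def)
  have pos: "decidable m (Suc (Suc k)) (\<lambda>os c. 2 \<le> ?v os (c ! 0 # drop 2 c))"
    by (intro decidable_le computable_const computable_drop_snd v)
  have "decidable m (Suc k) (\<lambda>os b. ?v os b = 1 \<and> (\<forall>i<b ! 0. 2 \<le> ?v os (i # tl b)))"
    using decidable_ball[OF pos computable_proj[of 0 "Suc k" m]]
    by (intro decidable_conj decidable_eq v computable_const) (simp_all add: drop_Suc)
  from decidable_bex[OF this computable_proj[of L k m]]
  have found: "decidable m k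
      (\<lambda>os a. \<exists>n<a ! L. ?v os (n # a) = 1 \<and> (\<forall>i<n. 2 \<le> ?v os (i # a)))"
    by (simp add: k_def)
  have "computable m (Suc k) (\<lambda>os b. of_bool (\<forall>i<Suc (b ! 0). 2 \<le> ?v os (i # tl b)))"
    using decidable_ball[OF pos computable_Suc[OF computable_proj[of 0 "Suc k" m]]]
    unfolding decidable_def by (simp add: drop_Suc)
  from computable_bounded_sum[OF this computable_proj[of L k m]]
  have count: "computable m k (\<lambda>os a. \<Sum>n<a ! L. of_bool (\<forall>i\<le>n. 2 \<le> ?v os (i # a)))"
    by (simp add: k_def less_Suc_eq_le)
  from computable_if[OF found computable_Suc[OF count] computable_const]
  show ?thesis
    unfolding k_def by (rule computable_cong) (simp add: clocked_value_Mn)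
qed

theorem computable_clocked_value: "computable m (L + Suc r) (clocked_value g L)"
proof (induction g arbitrary: L)
  case Z
  show ?case
    by (rule computable_clocked_value_Z)
next
  case S
  show ?case
    by (rule computable_clocked_value_S)
next
  case (Proj i)
  show ?case
    by (rule computable_clocked_value_Proj)
next
  case (Orc i)
  show ?case
    by (rule computable_clocked_value_Orc)
next
  case (Cn f gs)
  then show ?case
    by (intro computable_clocked_value_Cn)
next
  case (Pr f g)
  then show ?case
    by (intro computable_clocked_value_Pr)
next
  case (Mn f)
  then show ?case
    by (intro computable_clocked_value_Mn)
qed

end

lemma oracle_substitution_id: "oracle_substitution (\<lambda>os env. os) m 0 m"
  by unfold_locales (simp_all add: decidable_oracle_hd[unfolded One_nat_def])

lemma computable_clocked_eval:
  "computable m 2 (\<lambda>os a. code_option (clocked_eval f (a ! 1) os [a ! 0]))"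
proof -
  have "computable m 2 (oracle_substitution.clocked_value (\<lambda>os env. os) f 1)"
    using oracle_substitution.computable_clocked_value[OF oracle_substitution_id, of m 1 f]
    by (simp add: numeral_2_eq_2)
  then show ?thesis
    by (rule computable_cong)
      (auto simp: oracle_substitution.clocked_value_def[OF oracle_substitution_id]
        numeral_2_eq_2 length_Suc_conv)
qed

lemma decidable_ex_clocked_eval_None:
  "decidable m 2 (\<lambda>os a. \<exists>j<Suc (a ! 1). clocked_eval f (a ! 0) os [j] = None)"
proof -
  have "computable m (length [0, 1 :: nat]) (\<lambda>os a. code_option (clocked_eval f (a ! 1) os [a ! 0]))"
    using computable_clocked_eval[of m f] by (simp add: numeral_2_eq_2)
  from computable_reindex[OF this, of 3]
  have "computable m 3 (\<lambda>os b. code_option (clocked_eval f (b ! 1) os [b ! 0]))"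
    by simp
  from decidable_eq[OF this computable_const[of m 3 0]]
  have "decidable m (Suc 2) (\<lambda>os b. clocked_eval f (b ! 1) os [b ! 0] = None)"
    by (simp add: code_option_eq_0_iff numeral_3_eq_3)
  from decidable_bex[OF this computable_Suc[OF computable_proj[of 1 2 m]]] show ?thesis
    by simp
qed

lemma sigma02I:
  assumes R: "decidable (length ps + 2) 2 R"
    and P: "\<And>x y. (x, y) \<in> P \<longleftrightarrow> (\<exists>N. \<forall>t. R (ps @ [x, y]) [t, N])"
  shows "sigma02 ps P"
proof -
  obtain c where c: "\<And>os xs. length os = length ps + 2 \<Longrightarrow> length xs = 2
      \<Longrightarrow> reval os c xs (of_bool (R os xs))"
    using R unfolding decidable_def computable_def by blast
  have "halts os (Mn c) [N] \<longleftrightarrow> (\<exists>t. \<not> R os [t, N])" if os: "length os = length ps + 2" for os N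
  proof
    assume "halts os (Mn c) [N]"
    then obtain t where "reval os c [t, N] 0"
      unfolding halts_def by (auto elim: reval.cases)
    with c[OF os, of "[t, N]"] have "\<not> R os [t, N]"
      using reval_deterministic by fastforce
    then show "\<exists>t. \<not> R os [t, N]" ..
  next
    assume "\<exists>t. \<not> R os [t, N]"
    then obtain t where t: "\<not> R os [t, N]" "\<forall>t'<t. R os [t', N]"
      using exists_least_iff[of "\<lambda>t. \<not> R os [t, N]"] by blast
    have "reval os (Mn c) [N] t"
    proof (rule reval.mn)
      show "reval os c [t, N] 0"
        using c[OF os, of "[t, N]"] t(1) by simp
      show "\<forall>t'<t. \<exists>k. reval os c [t', N] (Suc k)"
      proof (intro allI impI exI[of _ 0])
        fix t'
        assume "t' < t"
        then show "reval os c [t', N] (Suc 0)"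
          using c[OF os, of "[t', N]"] t(2) by simp
      qed
    qed
    then show "halts os (Mn c) [N]"
      unfolding halts_def ..
  qed
  then show ?thesis
    unfolding sigma02_def using P by (intro exI[of _ "Mn c"]) auto
qed

section \<open>\<Sigma>^0_2 equivalence relations are \<Sigma>^0_2-graphable\<close>

lemma decidable_oracles_differ_below:
  assumes "k < m" "l < m"
  shows "decidable m 2 (\<lambda>os a. \<exists>i<a ! 1. (os ! k) i \<noteq> (os ! l) i)"
proof -
  have "decidable m (Suc 2) (\<lambda>os b. \<not> ((os ! k) (b ! 0) \<longleftrightarrow> (os ! l) (b ! 0)))"
    using assms by (intro decidable_not decidable_iff decidable_oracle computable_proj) simp_all
  from decidable_bex[OF this computable_proj[of 1 2 m]] show ?thesis
    by simp
qed

lemma sigma02_diff_Id: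
  assumes "sigma02 ps E"
  shows "sigma02 ps (E - Id)"
proof -
  obtain f where f: "\<And>x y. (x, y) \<in> E \<longleftrightarrow> (\<exists>n. \<not> halts (ps @ [x, y]) f [n])"
    using assms unfolding sigma02_def by blast
  have "(x, y) \<in> E - Id \<longleftrightarrow> (\<exists>N. (\<exists>i<N. x i \<noteq> y i) \<and> (\<exists>j<Suc N. \<not> halts (ps @ [x, y]) f [j]))"
    for x y
  proof
    assume "(x, y) \<in> E - Id"
    then have "x \<noteq> y" "\<exists>n. \<not> halts (ps @ [x, y]) f [n]"
      using f by auto
    then obtain i n where "x i \<noteq> y i" "\<not> halts (ps @ [x, y]) f [n]"
      by (auto simp: fun_eq_iff)
    moreover have "i < max (Suc i) n" "n < Suc (max (Suc i) n)"
      by auto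
    ultimately show "\<exists>N. (\<exists>i<N. x i \<noteq> y i) \<and> (\<exists>j<Suc N. \<not> halts (ps @ [x, y]) f [j])"
      by blast
  qed (auto simp: f)
  then have E: "(x, y) \<in> E - Id \<longleftrightarrow> (\<exists>N. \<forall>t. (\<exists>i<N. x i \<noteq> y i)
      \<and> (\<exists>j<Suc N. clocked_eval f t (ps @ [x, y]) [j] = None))" for x y
    by (simp add: ex_not_halts_iff_clocked_eval)
  have "decidable (length ps + 2) 2
      (\<lambda>os a. (\<exists>i<a ! 1. (os ! length ps) i \<noteq> (os ! Suc (length ps)) i)
        \<and> (\<exists>j<Suc (a ! 1). clocked_eval f (a ! 0) os [j] = None))"
    by (intro decidable_conj decidable_oracles_differ_below decidable_ex_clocked_eval_None) simp_all
  then show ?thesis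
    by (rule sigma02I) (unfold E, simp add: nth_append)
qed

lemma equiv_rtrancl_diff_Id:
  assumes "equiv UNIV E"
  shows "(E - Id)\<^sup>* = E"
proof -
  have "(x, y) \<in> E" if "(x, y) \<in> E\<^sup>*" for x y
    using that
  proof (induction rule: rtrancl_induct)
    case base
    then show ?case
      using assms by (simp add: equiv_def refl_on_def)
  next
    case (step y z)
    then show ?case
      using assms unfolding equiv_def by (blast elim: transE)
  qed
  then show ?thesis
    unfolding rtrancl_r_diff_Id by auto
qed

lemma graphable_if_sigma02:
  assumes "equiv UNIV E" "sigma02 ps E"
  shows "graphable (sigma02 ps) E"
proof -
  have "sym (E - Id)"
    using assms(1) unfolding equiv_def sym_def by blast
  moreover have "irrefl (E - Id)"
    by (simp add: irrefl_def)
  ultimately show ?thesis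
    unfolding graphable_def
    using sigma02_diff_Id[OF assms(2)] equiv_rtrancl_diff_Id[OF assms(1)] by blast
qed

section \<open>Padded paths and Koenig's lemma\<close>

text \<open>Repeating vertices lets the length \<open>N\<close> of a path also bound the witnesses of its
  edges.\<close>

definition padded_path :: "('a \<Rightarrow> 'a \<Rightarrow> nat \<Rightarrow> bool) \<Rightarrow> 'a \<Rightarrow> 'a \<Rightarrow> nat \<Rightarrow> (nat \<Rightarrow> 'a) \<Rightarrow> bool"
  where "padded_path Q x y N z \<longleftrightarrow>
    z 0 = x \<and> z N = y \<and> (\<forall>i<N. z i = z (Suc i) \<or> (\<exists>j<Suc N. Q (z i) (z (Suc i)) j))"

lemma padded_path_if_rtrancl:
  assumes "(x, y) \<in> {(u, v). \<exists>j. Q u v j}\<^sup>*"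
  shows "\<exists>N z. padded_path Q x y N z"
proof -
  obtain k z where z: "z 0 = x" "z k = y" "\<forall>i<k. \<exists>j. Q (z i) (z (Suc i)) j"
    using assms unfolding rtrancl_power relpow_fun_conv by auto
  then obtain w where w: "\<forall>i<k. Q (z i) (z (Suc i)) (w i)"
    by metis
  define N where "N = k + (\<Sum>i<k. w i)"
  define z' where "z' i = (if i \<le> k then z i else y)" for i
  have "z' i = z' (Suc i) \<or> (\<exists>j<Suc N. Q (z' i) (z' (Suc i)) j)" for i
  proof (cases "i < k")
    case True
    then have "Q (z' i) (z' (Suc i)) (w i)"
      using w by (simp add: z'_def)
    moreover have "w i < Suc N"
      using member_le_sum[of i "{..<k}" w] True by (simp add: N_def)
    ultimately show ?thesis
      by blast
  next
    case False
    then show ?thesis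
      using z(2) by (simp add: z'_def)
  qed
  moreover have "z' 0 = x" "z' N = y"
    using z by (auto simp: z'_def N_def)
  ultimately show ?thesis
    unfolding padded_path_def by blast
qed

lemma rtrancl_if_padded_path:
  assumes "padded_path Q x y N z"
  shows "(x, y) \<in> {(u, v). \<exists>j. Q u v j}\<^sup>*"
proof -
  have "(z 0, z i) \<in> {(u, v). \<exists>j. Q u v j}\<^sup>*" if "i \<le> N" for i
    using that
  proof (induction i)
    case (Suc i)
    then have "i < N"
      by simp
    with assms have "z i = z (Suc i) \<or> (z i, z (Suc i)) \<in> {(u, v). \<exists>j. Q u v j}"
      unfolding padded_path_def by blast
    then have "(z i, z (Suc i)) \<in> {(u, v). \<exists>j. Q u v j}\<^sup>*"
      by auto
    with Suc show ?case
      by (meson Suc_leD rtrancl_trans)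
  qed simp
  with assms show ?thesis
    unfolding padded_path_def by blast
qed

lemma rtrancl_iff_padded_path:
  "(x, y) \<in> {(u, v). \<exists>j. Q u v j}\<^sup>* \<longleftrightarrow> (\<exists>N z. padded_path Q x y N z)"
  using padded_path_if_rtrancl rtrancl_if_padded_path by metis

definition extendable :: "(nat \<Rightarrow> (nat \<Rightarrow> bool) \<Rightarrow> bool) \<Rightarrow> nat \<Rightarrow> (nat \<Rightarrow> bool) \<Rightarrow> bool" where
  "extendable B L w \<longleftrightarrow> (\<forall>L'. \<exists>W. (\<forall>p<L. W p = w p) \<and> B L' W)"

lemma extendable_Suc:
  assumes antimono: "\<And>L L' W. B L' W \<Longrightarrow> L \<le> L' \<Longrightarrow> B L W"
    and "extendable B L w"
  shows "extendable B (Suc L) (w(L := False)) \<or> extendable B (Suc L) (w(L := True))"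
proof (rule ccontr)
  assume "\<not> ?thesis"
  then have "\<not> extendable B (Suc L) (w(L := b))" for b
    by (cases b) simp_all
  then have "\<exists>L'. \<forall>W. \<not> ((\<forall>p<Suc L. W p = (w(L := b)) p) \<and> B L' W)" for b
    unfolding extendable_def by simp
  then obtain L' where L': "\<And>b W. (\<forall>p<Suc L. W p = (w(L := b)) p) \<Longrightarrow> \<not> B (L' b) W"
    by metis
  obtain W where W: "\<forall>p<L. W p = w p" "B (max (L' False) (L' True)) W"
    using assms(2) unfolding extendable_def by blast
  have "\<forall>p<Suc L. W p = (w(L := W L)) p"
    using W(1) by (auto simp: less_Suc_eq)
  moreover have "B (L' (W L)) W"
    using antimono[OF W(2)] by (cases "W L") simp_all
  ultimately show False
    using L' by blast
qed

lemma koenig_lemma: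
  fixes B :: "nat \<Rightarrow> (nat \<Rightarrow> bool) \<Rightarrow> bool"
  assumes antimono: "\<And>L L' W. B L' W \<Longrightarrow> L \<le> L' \<Longrightarrow> B L W"
    and local: "\<And>L W W'. \<forall>p<L. W p = W' p \<Longrightarrow> B L W \<Longrightarrow> B L W'"
    and nonempty: "\<And>L. \<exists>W. B L W"
  shows "\<exists>W. \<forall>L. B L W"
proof -
  define ws where "ws = rec_nat (\<lambda>_. False) (\<lambda>L w.
    if extendable B (Suc L) (w(L := False)) then w(L := False) else w(L := True))"
  have ws_Suc: "ws (Suc L) = (if extendable B (Suc L) ((ws L)(L := False))
      then (ws L)(L := False) else (ws L)(L := True))" for L
    by (simp add: ws_def)
  have extendable_ws: "extendable B L (ws L)" for L
  proof (induction L)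
    case 0
    then show ?case
      using nonempty by (simp add: extendable_def)
  next
    case (Suc L)
    then show ?case
      using extendable_Suc[OF antimono Suc] by (auto simp: ws_Suc)
  qed
  have ws_stable: "ws L' p = ws L p" if "p < L" "L \<le> L'" for L L' p
    using that(2)
  proof (induction rule: dec_induct)
    case (step L'')
    then show ?case
      using that(1) by (simp add: ws_Suc)
  qed simp
  define W where "W p = ws (Suc p) p" for p
  have "B L W" for L
  proof -
    obtain W' where "\<forall>p<L. W' p = ws L p" "B L W'"
      using extendable_ws[of L] unfolding extendable_def by blast
    moreover have "\<forall>p<L. ws L p = W p"
      unfolding W_def using ws_stable[of _ "Suc _" L] by (simp add: Suc_le_eq)
    ultimately show ?thesis
      using local[of L W' W] by simp
  qed
  then show ?thesis
    by blast
qed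

lemma ex_bits_eq: "\<exists>e<(2::nat) ^ L. \<forall>p<L. bit e p = W p"
proof -
  define e :: nat where "e = horner_sum of_bool 2 (map W [0..<L])"
  have "e < 2 ^ L"
    unfolding e_def using horner_sum_of_bool_2_less[of "map W [0..<L]"] by simp
  moreover have "\<forall>p<L. bit e p = W p"
    unfolding e_def by (simp add: bit_horner_sum_bit_iff)
  ultimately show ?thesis
    by blast
qed

text \<open>\<open>W\<close> interleaves \<open>N + 1\<close> reals, its columns. \<open>approx_path f ps x y N d W\<close> is the
  depth-\<open>d\<close> test of the claim that the columns form a padded path from \<open>x\<close> to \<open>y\<close> in
  the graph of \<open>f\<close>: it reads the first \<open>d\<close> bits of each column and runs \<open>f\<close> for \<open>d\<close>
  steps.\<close>

definition column :: "nat \<Rightarrow> (nat \<Rightarrow> bool) \<Rightarrow> nat \<Rightarrow> cantor" where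
  "column N W i = (\<lambda>m. W (m * Suc N + i))"

definition approx_path :: "recf \<Rightarrow> cantor list \<Rightarrow> cantor \<Rightarrow> cantor \<Rightarrow> nat \<Rightarrow> nat \<Rightarrow> (nat \<Rightarrow> bool) \<Rightarrow> bool"
  where "approx_path f ps x y N d W \<longleftrightarrow>
    (\<forall>m<d. column N W 0 m = x m \<and> column N W N m = y m) \<and>
    (\<forall>i<N. (\<forall>m<d. column N W i m = column N W (Suc i) m) \<or>
      (\<exists>j<Suc N. clocked_eval f d (ps @ [column N W i, column N W (Suc i)]) [j] = None))"

lemma column_index_less: "i \<le> N \<Longrightarrow> m < d \<Longrightarrow> m * Suc N + i < Suc N * d"
proof -
  assume "i \<le> N" "m < d"
  then have "m * Suc N + i < Suc m * Suc N"
    by simp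
  also have "\<dots> \<le> d * Suc N"
    using \<open>m < d\<close> by (intro mult_le_mono1) simp
  finally show ?thesis
    by (simp add: mult.commute)
qed

lemma approx_path_cong:
  assumes "\<forall>p < Suc N * d. W p = W' p"
  shows "approx_path f ps x y N d W = approx_path f ps x y N d W'"
proof -
  have column: "column N W i m = column N W' i m" if "i \<le> N" "m < d" for i m
    using assms column_index_less[OF that] unfolding column_def by simp
  have "clocked_eval f d (ps @ [column N W i, column N W (Suc i)]) xs
      = clocked_eval f d (ps @ [column N W' i, column N W' (Suc i)]) xs" if "i < N" for i xs
  proof (rule clocked_eval_use)
    fix k x
    assume "k < length (ps @ [column N W i, column N W (Suc i)])" "x < d"
    then show "((ps @ [column N W i, column N W (Suc i)]) ! k) x
        = ((ps @ [column N W' i, column N W' (Suc i)]) ! k) x"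
      using column[of i x] column[of "Suc i" x] that by (auto simp: nth_append nth_Cons')
  qed simp
  with column show ?thesis
    unfolding approx_path_def by simp
qed

lemma approx_path_antimono:
  assumes "approx_path f ps x y N d' W" "d \<le> d'"
  shows "approx_path f ps x y N d W"
proof -
  have "clocked_eval f d os xs = None" if "clocked_eval f d' os xs = None" for os xs
    using clocked_eval_None_antimono[OF that assms(2)] .
  with assms show ?thesis
    unfolding approx_path_def by (meson less_le_trans)
qed

definition interleave :: "nat \<Rightarrow> (nat \<Rightarrow> cantor) \<Rightarrow> nat \<Rightarrow> bool" where
  "interleave N z p = z (p mod Suc N) (p div Suc N)"

lemma column_interleave:
  assumes "i \<le> N"
  shows "column N (interleave N z) i = z i"
proof
  fix m
  have "i < Suc N"
    using assms by simp
  then have "(m * Suc N + i) mod Suc N = i" "(m * Suc N + i) div Suc N = m"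
    using div_mult_self3[of "Suc N" m i] by (simp_all only: mod_mult_self3) simp_all
  then show "column N (interleave N z) i m = z i m"
    unfolding column_def interleave_def by simp
qed

lemma approx_path_interleave:
  assumes "padded_path (\<lambda>u v j. \<not> halts (ps @ [u, v]) f [j]) x y N z"
  shows "approx_path f ps x y N d (interleave N z)"
  unfolding approx_path_def
proof (intro conjI allI impI)
  fix m
  show "column N (interleave N z) 0 m = x m" "column N (interleave N z) N m = y m"
    using assms by (simp_all add: padded_path_def column_interleave)
next
  fix i
  assume "i < N"
  with assms have "z i = z (Suc i) \<or> (\<exists>j<Suc N. \<not> halts (ps @ [z i, z (Suc i)]) f [j])"
    unfolding padded_path_def by blast
  with \<open>i < N\<close> show "(\<forall>m<d. column N (interleave N z) i m = column N (interleave N z) (Suc i) m)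
    \<or> (\<exists>j<Suc N. clocked_eval f d
      (ps @ [column N (interleave N z) i, column N (interleave N z) (Suc i)]) [j] = None)"
    by (auto simp: column_interleave halts_iff_clocked_eval)
qed

lemma approx_paths_limit:
  assumes "\<forall>d. \<exists>W. approx_path f ps x y N d W"
  shows "\<exists>W. \<forall>d. approx_path f ps x y N d W"
proof -
  \<comment> \<open>Koenig's lemma counts bits; the test of depth \<open>d\<close> reads \<open>Suc N * d\<close> of them.\<close>
  have "\<exists>W. \<forall>L. approx_path f ps x y N (L div Suc N) W"
  proof (rule koenig_lemma)
    show "approx_path f ps x y N (L div Suc N) W"
      if "approx_path f ps x y N (L' div Suc N) W" "L \<le> L'" for L L' W
      using that by (elim approx_path_antimono) (simp add: div_le_mono)
    show "approx_path f ps x y N (L div Suc N) W'"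
      if "\<forall>p<L. W p = W' p" "approx_path f ps x y N (L div Suc N) W" for L W W'
    proof -
      have "Suc N * (L div Suc N) \<le> L"
        by (metis div_times_less_eq_dividend mult.commute)
      with that show ?thesis
        using approx_path_cong[of N "L div Suc N" W W'] by simp
    qed
    show "\<exists>W. approx_path f ps x y N (L div Suc N) W" for L
      using assms by blast
  qed
  then obtain W where W: "\<forall>L. approx_path f ps x y N (L div Suc N) W"
    by blast
  have "approx_path f ps x y N d W" for d
  proof -
    have "d * Suc N div Suc N = d"
      by (rule div_mult_self_is_m) simp
    with W show ?thesis
      by metis
  qed
  then show ?thesis
    by blast
qed

lemma padded_path_if_approx_paths:
  assumes "\<forall>d. \<exists>W. approx_path f ps x y N d W"
  shows "\<exists>z. padded_path (\<lambda>u v j. \<not> halts (ps @ [u, v]) f [j]) x y N z"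
proof -
  obtain W where W: "approx_path f ps x y N d W" for d
    using approx_paths_limit[OF assms] by blast
  define z where "z = column N W"
  have "z 0 = x" "z N = y"
    using W[of "Suc _"] unfolding approx_path_def z_def by (auto simp: fun_eq_iff)
  moreover have "\<exists>j<Suc N. \<not> halts (ps @ [z i, z (Suc i)]) f [j]"
    if i: "i < N" and differ: "z i \<noteq> z (Suc i)" for i
  proof -
    obtain m where m: "z i m \<noteq> z (Suc i) m"
      using differ by blast
    have "\<exists>j<Suc N. clocked_eval f t (ps @ [z i, z (Suc i)]) [j] = None" for t
    proof -
      have "m < max t (Suc m)"
        by simp
      with m have "\<not> (\<forall>m'<max t (Suc m). z i m' = z (Suc i) m')"
        by blast
      with W[of "max t (Suc m)"] i obtain j where
        "j < Suc N" "clocked_eval f (max t (Suc m)) (ps @ [z i, z (Suc i)]) [j] = None"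
        unfolding approx_path_def z_def by blast
      then show ?thesis
        using clocked_eval_None_antimono[of f "max t (Suc m)" _ "[j]" t] by auto
    qed
    then show ?thesis
      by (simp add: ex_not_halts_iff_clocked_eval)
  qed
  ultimately show ?thesis
    unfolding padded_path_def by blast
qed

lemma padded_path_iff_approx_paths:
  "(\<exists>z. padded_path (\<lambda>u v j. \<not> halts (ps @ [u, v]) f [j]) x y N z)
    \<longleftrightarrow> (\<forall>d. \<exists>e<(2::nat) ^ (Suc N * d). approx_path f ps x y N d (bit e))"
proof
  assume "\<exists>z. padded_path (\<lambda>u v j. \<not> halts (ps @ [u, v]) f [j]) x y N z"
  then obtain z where z: "approx_path f ps x y N d (interleave N z)" for d
    using approx_path_interleave by blast
  show "\<forall>d. \<exists>e<(2::nat) ^ (Suc N * d). approx_path f ps x y N d (bit e)"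
  proof
    fix d
    obtain e :: nat where e: "e < 2 ^ (Suc N * d)" and bits: "\<forall>p<Suc N * d. bit e p = interleave N z p"
      using ex_bits_eq[of "Suc N * d" "interleave N z"] by blast
    have "approx_path f ps x y N d (bit e)"
      using z[of d] approx_path_cong[OF bits] by simp
    with e show "\<exists>e<(2::nat) ^ (Suc N * d). approx_path f ps x y N d (bit e)"
      by blast
  qed
next
  assume "\<forall>d. \<exists>e<(2::nat) ^ (Suc N * d). approx_path f ps x y N d (bit e)"
  then show "\<exists>z. padded_path (\<lambda>u v j. \<not> halts (ps @ [u, v]) f [j]) x y N z"
    by (intro padded_path_if_approx_paths) blast
qed

section \<open>Connectedness relations of \<Sigma>^0_2 graphs are \<Sigma>^0_2\<close>

lemma decidable_column_bit:
  assumes "computable m k N" "computable m k E" "computable m k I" "computable m k M"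
  shows "decidable m k (\<lambda>os xs. column (N os xs) (bit (E os xs)) (I os xs) (M os xs))"
  unfolding column_def by (intro decidable_bit computable_add computable_mult computable_Suc assms)

text \<open>For \<open>env = [e, i, N]\<close>: the parameters followed by the columns \<open>i\<close> and \<open>i + 1\<close> of the
  bits of \<open>e\<close>.\<close>

definition column_oracles :: "nat \<Rightarrow> cantor list \<Rightarrow> nat list \<Rightarrow> cantor list" where
  "column_oracles lp os env = take lp os @
    [column (env ! 2) (bit (env ! 0)) (env ! 1), column (env ! 2) (bit (env ! 0)) (Suc (env ! 1))]"

lemma oracle_substitution_column_oracles:
  "oracle_substitution (column_oracles lp) (lp + 2) 3 (lp + 2)"
proof
  fix os :: "cantor list" and env :: "nat list"
  assume "length os = lp + 2" "length env = 3"
  then show "length (column_oracles lp os env) = lp + 2"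
    by (simp add: column_oracles_def)
next
  fix i
  assume i: "i < lp + 2"
  consider "i < lp" | "i = lp" | "i = Suc lp"
    using i by linarith
  then show "decidable (lp + 2) (Suc 3) (\<lambda>os a. (column_oracles lp os (take 3 a) ! i) (a ! 3))"
  proof cases
    case 1
    have "decidable (lp + 2) (Suc 3) (\<lambda>os a. (os ! i) (a ! 3))"
      using i by (intro decidable_oracle computable_proj) auto
    then show ?thesis
      by (rule decidable_cong) (use 1 in \<open>simp add: column_oracles_def nth_append\<close>)
  next
    case 2
    have "decidable (lp + 2) (Suc 3) (\<lambda>os a. column (a ! 2) (bit (a ! 0)) (a ! 1) (a ! 3))"
      by (intro decidable_column_bit computable_proj) auto
    then show ?thesis
      by (rule decidable_cong) (use 2 in \<open>simp add: column_oracles_def nth_append\<close>)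
  next
    case 3
    have "decidable (lp + 2) (Suc 3) (\<lambda>os a. column (a ! 2) (bit (a ! 0)) (Suc (a ! 1)) (a ! 3))"
      by (intro decidable_column_bit computable_Suc computable_proj) auto
    then show ?thesis
      by (rule decidable_cong) (use 3 in \<open>simp add: column_oracles_def nth_append\<close>)
  qed
qed

lemma computable_clocked_eval_columns:
  "computable (lp + 2) 5
    (\<lambda>os q. code_option (clocked_eval f (q ! 3) (column_oracles lp os [q ! 2, q ! 1, q ! 4]) [q ! 0]))"
proof -
  let ?v = "oracle_substitution.clocked_value (column_oracles lp) f 1"
  have "computable (lp + 2) (1 + Suc 3) ?v"
    by (rule oracle_substitution.computable_clocked_value[OF oracle_substitution_column_oracles])
  then have "computable (lp + 2) (length [0, 3, 2, 1, 4 :: nat]) ?v"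
    by (simp add: eval_nat_numeral)
  from computable_reindex[OF this, of 5]
  have "computable (lp + 2) 5 (\<lambda>os q. ?v os [q ! 0, q ! 3, q ! 2, q ! 1, q ! 4])"
    by simp
  then show ?thesis
    by (rule computable_cong)
      (simp add: oracle_substitution.clocked_value_def[OF oracle_substitution_column_oracles])
qed

lemma decidable_approx_path:
  "decidable (lp + 2) 3
    (\<lambda>os b. approx_path f (take lp os) (os ! lp) (os ! Suc lp) (b ! 2) (b ! 1) (bit (b ! 0)))"
proof -
  have "decidable (lp + 2) (Suc 3) (\<lambda>os c. column (c ! 3) (bit (c ! 1)) 0 (c ! 0) = (os ! lp) (c ! 0)
      \<and> column (c ! 3) (bit (c ! 1)) (c ! 3) (c ! 0) = (os ! Suc lp) (c ! 0))"
    by (intro decidable_conj decidable_iff decidable_column_bit decidable_oracle computable_proj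
        computable_const) auto
  from decidable_ball[OF this computable_proj[of 1 3]]
  have ends: "decidable (lp + 2) 3 (\<lambda>os b. \<forall>m<b ! 1. column (b ! 2) (bit (b ! 0)) 0 m = (os ! lp) m
      \<and> column (b ! 2) (bit (b ! 0)) (b ! 2) m = (os ! Suc lp) m)"
    by simp
  have "decidable (lp + 2) (Suc 4) (\<lambda>os q.
      column (q ! 4) (bit (q ! 2)) (q ! 1) (q ! 0) = column (q ! 4) (bit (q ! 2)) (Suc (q ! 1)) (q ! 0))"
    by (intro decidable_iff decidable_column_bit computable_Suc computable_proj) auto
  from decidable_ball[OF this computable_proj[of 2 4]]
  have agree: "decidable (lp + 2) (Suc 3) (\<lambda>os c.
      \<forall>m<c ! 2. column (c ! 3) (bit (c ! 1)) (c ! 0) m = column (c ! 3) (bit (c ! 1)) (Suc (c ! 0)) m)"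
    by simp
  have "decidable (lp + 2) (Suc 4) (\<lambda>os q.
      code_option (clocked_eval f (q ! 3) (column_oracles lp os [q ! 2, q ! 1, q ! 4]) [q ! 0]) = 0)"
    using decidable_eq[OF computable_clocked_eval_columns computable_const] by simp
  from decidable_bex[OF this computable_Suc[OF computable_proj[of 3 4]]]
  have diverge: "decidable (lp + 2) (Suc 3) (\<lambda>os c.
      \<exists>j<Suc (c ! 3). clocked_eval f (c ! 2) (column_oracles lp os [c ! 1, c ! 0, c ! 3]) [j] = None)"
    by (simp add: code_option_eq_0_iff)
  from decidable_ball[OF decidable_disj[OF agree diverge] computable_proj[of 2 3]]
  have links: "decidable (lp + 2) 3 (\<lambda>os b. \<forall>i<b ! 2.
      (\<forall>m<b ! 1. column (b ! 2) (bit (b ! 0)) i m = column (b ! 2) (bit (b ! 0)) (Suc i) m)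
      \<or> (\<exists>j<Suc (b ! 2). clocked_eval f (b ! 1) (column_oracles lp os [b ! 0, i, b ! 2]) [j] = None))"
    by simp
  from decidable_conj[OF ends links] show ?thesis
    by (rule decidable_cong) (simp add: approx_path_def column_oracles_def)
qed

lemma decidable_ex_approx_path:
  "decidable (lp + 2) 2 (\<lambda>os a. \<exists>e<(2::nat) ^ (Suc (a ! 1) * a ! 0).
    approx_path f (take lp os) (os ! lp) (os ! Suc lp) (a ! 1) (a ! 0) (bit e))"
proof -
  have "decidable (lp + 2) (Suc 2)
      (\<lambda>os b. approx_path f (take lp os) (os ! lp) (os ! Suc lp) (b ! 2) (b ! 1) (bit (b ! 0)))"
    using decidable_approx_path[of lp f] by (simp add: eval_nat_numeral)
  moreover have "computable (lp + 2) 2 (\<lambda>os a. 2 ^ (Suc (a ! 1) * a ! 0))"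
    by (intro computable_pow2 computable_mult computable_Suc computable_proj) auto
  ultimately show ?thesis
    using decidable_bex by fastforce
qed

lemma sigma02_rtrancl:
  assumes "sigma02 ps G"
  shows "sigma02 ps (G\<^sup>*)"
proof -
  obtain f where "\<And>x y. (x, y) \<in> G \<longleftrightarrow> (\<exists>n. \<not> halts (ps @ [x, y]) f [n])"
    using assms unfolding sigma02_def by blast
  then have "G = {(u, v). \<exists>j. \<not> halts (ps @ [u, v]) f [j]}"
    by auto
  then have "(x, y) \<in> G\<^sup>* \<longleftrightarrow>
      (\<exists>N. \<forall>d. \<exists>e<(2::nat) ^ (Suc N * d). approx_path f ps x y N d (bit e))" for x y
    by (simp only: rtrancl_iff_padded_path padded_path_iff_approx_paths)
  then show ?thesis
    by (intro sigma02I[OF decidable_ex_approx_path[of "length ps" f]]) (simp add: nth_append)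
qed

theorem graphable_sigma02_iff:
  assumes "equiv UNIV E"
  shows "graphable (sigma02 ps) E \<longleftrightarrow> sigma02 ps E"
  using graphable_if_sigma02[OF assms] sigma02_rtrancl unfolding graphable_def by blast

theorem theorem3p10:
  fixes E :: "(cantor \<times> cantor) set"
  assumes "equiv UNIV E"
  shows "(graphable (sigma02 []) E \<longleftrightarrow> sigma02 [] E)
       \<and> (\<forall>a :: cantor. graphable (sigma02 [a]) E \<longleftrightarrow> sigma02 [a] E)"
  using graphable_sigma02_iff[OF assms] by blast

end
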